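(* Let $n\ge3$, $\beta=\frac n{n-2}$ and $\xi(x)=\prod_{i=0}^\infty\left(1+\frac{\beta^i}{\sqrt{2\beta^i-1}}x\right)^{\beta^{-i}}$. Then (i) $\xi(x)\le(1+x)^n$ for every $x\ge0$; (ii) $\xi(x)\le(4e)^{n/4}x^{n/2}$ for every $x\ge1$. *)

theory Defs
  imports "HOL-Analysis.Analysis"
begin

definition beta :: "nat \<Rightarrow> real" where
  "beta n = real n / (real n - 2)"

definition xi :: "nat \<Rightarrow> real \<Rightarrow> real" where
  "xi n x = (\<Prod>i. (1 + beta n ^ i / sqrt (2 * beta n ^ i - 1) * x) powr (beta n powr (- real i)))"

end

theory Submission imports Defs begin

text \<open>Taking logarithms, \<open>ln \<xi>(x) = \<Sum>\<^sub>i r\<^sup>i ln (1 + c\<^sub>i x)\<close> with \<open>r = 1/\<beta>\<close> and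
  \<open>c\<^sub>i = \<beta>\<^sup>i / sqrt (2 \<beta>\<^sup>i - 1) \<le> sqrt (\<beta>\<^sup>i)\<close>. The argument works for any base \<open>b > 1\<close>
  in place of \<open>\<beta>\<close>, with \<open>n\<close> replaced by \<open>m = 2b/(b - 1)\<close> (which is \<open>n\<close> for \<open>b = \<beta>\<close>),
  because the weights sum to \<open>\<Sum> r\<^sup>i = m/2\<close>. For (i), the tangent line of \<open>ln\<close> at \<open>1 + 2x\<close>
  bounds each term by \<open>r\<^sup>i ln (1 + 2x) + x/(1 + 2x) (sqrt (r)\<^sup>i - 2 r\<^sup>i)\<close>; since
  \<open>\<Sum> sqrt (r)\<^sup>i \<le> m\<close> the correction is nonpositive, leaving \<open>(m/2) ln (1 + 2x) \<le> m ln (1 + x)\<close>.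
  For (ii), \<open>x \<ge> 1\<close> gives \<open>1 + c\<^sub>i x \<le> 2 x sqrt (b\<^sup>i)\<close>, so \<open>ln \<xi>(x) \<le> (m/2) ln (2x) + (ln b / 2) \<Sum> i r\<^sup>i\<close>,
  and the last term is at most \<open>m/4\<close> because \<open>ln b \<le> b - 1\<close>.\<close>

definition xi_coeff :: "real \<Rightarrow> nat \<Rightarrow> real" where
  "xi_coeff b i = b ^ i / sqrt (2 * b ^ i - 1)"

definition log_xi :: "real \<Rightarrow> real \<Rightarrow> real" where
  "log_xi b x = (\<Sum>i. inverse b ^ i * ln (1 + xi_coeff b i * x))"

lemma xi_coeff_nonneg:
  assumes "1 \<le> b"
  shows "0 \<le> xi_coeff b i"
proof -
  have "1 \<le> b ^ i" using assms by simp
  thus ?thesis unfolding xi_coeff_def by (intro divide_nonneg_nonneg) auto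
qed

lemma xi_coeff_le_sqrt_power:
  assumes "1 \<le> b"
  shows "xi_coeff b i \<le> sqrt (b ^ i)"
proof -
  have bi: "1 \<le> b ^ i" using assms by simp
  have "b ^ i / sqrt (2 * b ^ i - 1) \<le> b ^ i / sqrt (b ^ i)"
    using bi by (intro divide_left_mono) auto
  also have "\<dots> = sqrt (b ^ i)" using bi by (simp add: real_div_sqrt)
  finally show ?thesis unfolding xi_coeff_def .
qed

lemma inverse_power_mult_sqrt_power:
  fixes b :: real
  assumes "0 < b"
  shows "inverse b ^ i * sqrt (b ^ i) = sqrt (inverse b) ^ i"
proof -
  have "inverse b ^ i * sqrt (b ^ i) = inverse (sqrt (b ^ i))"
    using assms by (simp add: power_inverse field_simps)
  thus ?thesis by (simp add: real_sqrt_power real_sqrt_inverse power_inverse)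
qed

lemma ln_le_tangent:
  fixes a y :: real
  assumes "0 < a" "0 < y"
  shows "ln y \<le> ln a + (y - a) / a"
proof -
  have "ln y - ln a = ln (y / a)" using assms by (simp add: ln_div)
  also have "\<dots> \<le> y / a - 1" using assms by (intro ln_le_minus_one) auto
  also have "\<dots> = (y - a) / a" using assms by (simp add: field_simps)
  finally show ?thesis by simp
qed

lemma log_xi_term_le_geometric:
  assumes "1 < b" "0 \<le> x"
  shows "inverse b ^ i * ln (1 + xi_coeff b i * x) \<le> x * sqrt (inverse b) ^ i"
proof -
  have cx: "0 \<le> xi_coeff b i * x" using xi_coeff_nonneg assms by simp
  have "ln (1 + xi_coeff b i * x) \<le> sqrt (b ^ i) * x"
    using ln_add_one_self_le_self[OF cx] xi_coeff_le_sqrt_power[of b i] assms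
    by (smt (verit) mult_right_mono)
  hence "inverse b ^ i * ln (1 + xi_coeff b i * x) \<le> inverse b ^ i * (sqrt (b ^ i) * x)"
    using assms by (intro mult_left_mono) auto
  also have "\<dots> = x * sqrt (inverse b) ^ i"
    using inverse_power_mult_sqrt_power[of b i] assms by (simp add: algebra_simps)
  finally show ?thesis .
qed

lemma summable_log_xi:
  assumes "1 < b" "0 \<le> x"
  shows "summable (\<lambda>i. inverse b ^ i * ln (1 + xi_coeff b i * x))"
proof (rule summable_comparison_test)
  have "\<bar>sqrt (inverse b)\<bar> < 1" using assms by (simp add: inverse_less_1_iff)
  thus "summable (\<lambda>i. x * sqrt (inverse b) ^ i)"
    by (intro summable_mult summable_geometric) (simp add: real_norm_def)
  show "\<exists>N. \<forall>i\<ge>N. norm (inverse b ^ i * ln (1 + xi_coeff b i * x)) \<le> x * sqrt (inverse b) ^ i"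
    using log_xi_term_le_geometric[OF assms] xi_coeff_nonneg[of b] assms by auto
qed

lemma prodinf_xi_factors_eq_exp_log_xi:
  assumes "1 < b" "0 \<le> x"
  shows "(\<Prod>i. (1 + xi_coeff b i * x) powr (b powr - real i)) = exp (log_xi b x)"
proof -
  have "(1 + xi_coeff b i * x) powr (b powr - real i)
      = exp (inverse b ^ i * ln (1 + xi_coeff b i * x))" for i
  proof -
    have "0 < 1 + xi_coeff b i * x"
      using mult_nonneg_nonneg[OF xi_coeff_nonneg[of b i] assms(2)] assms by linarith
    moreover have "b powr - real i = inverse b ^ i"
      using assms by (simp add: powr_minus powr_realpow power_inverse)
    ultimately show ?thesis by (simp add: powr_def)
  qed
  thus ?thesis unfolding log_xi_def using prodinf_exp[OF summable_log_xi[OF assms]] by simp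
qed

lemma sums_inverse_power:
  fixes b :: real
  assumes "1 < b"
  shows "(\<lambda>i. inverse b ^ i) sums (b / (b - 1))"
proof -
  have "(\<lambda>i. inverse b ^ i) sums (1 / (1 - inverse b))"
    using assms by (intro geometric_sums) (auto simp: inverse_less_1_iff)
  moreover have "1 / (1 - inverse b) = b / (b - 1)" using assms by (simp add: field_simps)
  ultimately show ?thesis by simp
qed

lemma sums_Suc_mult_inverse_power:
  fixes b :: real
  assumes "1 < b"
  shows "(\<lambda>i. real (Suc i) * inverse b ^ i) sums ((b / (b - 1))\<^sup>2)"
proof -
  have "(\<lambda>i. of_nat (Suc i) * inverse b ^ i) sums (1 / (1 - inverse b)\<^sup>2)"
    using assms by (intro geometric_deriv_sums) (auto simp: inverse_less_1_iff)
  moreover have "1 / (1 - inverse b)\<^sup>2 = (b / (b - 1))\<^sup>2"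
    using assms by (simp add: field_simps power2_eq_square)
  ultimately show ?thesis by simp
qed

text \<open>From \<open>1 - q\<^sup>2 = (1 - q)(1 + q) \<le> 2 (1 - q)\<close> for \<open>q = sqrt (1/b)\<close>.\<close>
lemma geometric_sqrt_inverse_le:
  fixes b :: real
  assumes "1 < b"
  shows "1 / (1 - sqrt (inverse b)) \<le> 2 * b / (b - 1)"
proof -
  define q where "q = sqrt (inverse b)"
  have q: "q < 1" "q\<^sup>2 = inverse b"
    using assms unfolding q_def by (auto simp: inverse_less_1_iff)
  have "q * q < 1" using q(2) assms by (simp add: power2_eq_square inverse_less_1_iff)
  hence "1 / (1 - q) = (1 + q) / (1 - q\<^sup>2)"
    using q(1) by (simp add: field_simps power2_eq_square)
  also have "\<dots> \<le> 2 / (1 - q\<^sup>2)"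
    using q assms by (intro divide_right_mono) (auto simp: inverse_le_1_iff)
  also have "1 - q\<^sup>2 = (b - 1) / b" using q(2) assms by (simp add: field_simps)
  also have "2 / ((b - 1) / b) = 2 * b / (b - 1)" by simp
  finally show ?thesis unfolding q_def .
qed

lemma log_xi_le_ln_one_plus:
  assumes b: "1 < b" and x: "0 \<le> x"
  shows "log_xi b x \<le> 2 * b / (b - 1) * ln (1 + x)"
proof -
  define r where "r = inverse b"
  define q where "q = sqrt r"
  define k where "k = b / (b - 1)"
  have r: "0 < r" using b r_def by simp
  have q: "0 < q" "q < 1" using b unfolding q_def r_def by (auto simp: inverse_less_1_iff)
  define h where "h i = r ^ i * ln (1 + 2 * x) + x / (1 + 2 * x) * (q ^ i - 2 * r ^ i)" for i
  have term_le: "r ^ i * ln (1 + xi_coeff b i * x) \<le> h i" for i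
  proof -
    have c: "0 \<le> xi_coeff b i" "xi_coeff b i \<le> sqrt (b ^ i)"
      using xi_coeff_nonneg xi_coeff_le_sqrt_power b by auto
    have "0 \<le> xi_coeff b i * x" using c x by simp
    hence "ln (1 + xi_coeff b i * x) \<le> ln (1 + 2 * x) + (xi_coeff b i * x - 2 * x) / (1 + 2 * x)"
      using ln_le_tangent[of "1 + 2 * x" "1 + xi_coeff b i * x"] x by simp
    also have "\<dots> = ln (1 + 2 * x) + x / (1 + 2 * x) * (xi_coeff b i - 2)"
      by (simp add: algebra_simps)
    also have "\<dots> \<le> ln (1 + 2 * x) + x / (1 + 2 * x) * (sqrt (b ^ i) - 2)"
      using c x by (intro add_left_mono mult_left_mono) auto
    finally have "r ^ i * ln (1 + xi_coeff b i * x)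
        \<le> r ^ i * (ln (1 + 2 * x) + x / (1 + 2 * x) * (sqrt (b ^ i) - 2))"
      using r by (simp add: mult_left_mono)
    also have "\<dots> = r ^ i * ln (1 + 2 * x) + x / (1 + 2 * x) * (r ^ i * sqrt (b ^ i) - 2 * r ^ i)"
      using x by (simp add: field_simps)
    finally show ?thesis
      using inverse_power_mult_sqrt_power[of b i] b unfolding h_def q_def r_def by simp
  qed
  have "(\<lambda>i. r ^ i) sums k" using sums_inverse_power[OF b] unfolding k_def r_def .
  moreover have "(\<lambda>i. q ^ i) sums (1 / (1 - q))" using q by (intro geometric_sums) auto
  ultimately have "h sums (k * ln (1 + 2 * x) + x / (1 + 2 * x) * (1 / (1 - q) - 2 * k))"
    unfolding h_def by (intro sums_add sums_mult sums_diff sums_mult2)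
  hence "log_xi b x \<le> k * ln (1 + 2 * x) + x / (1 + 2 * x) * (1 / (1 - q) - 2 * k)"
    unfolding log_xi_def r_def[symmetric]
    by (intro sums_le[OF _ summable_sums]) (use term_le summable_log_xi[OF b x] r_def in auto)
  also have "\<dots> \<le> k * ln (1 + 2 * x)"
  proof -
    have "1 / (1 - q) - 2 * k \<le> 0"
      using geometric_sqrt_inverse_le[OF b] by (simp add: k_def q_def r_def)
    hence "x / (1 + 2 * x) * (1 / (1 - q) - 2 * k) \<le> 0" using x by (intro mult_nonneg_nonpos) auto
    thus ?thesis by linarith
  qed
  also have "\<dots> \<le> k * ln ((1 + x)\<^sup>2)"
    using b x by (intro mult_left_mono ln_mono) (auto simp: k_def power2_eq_square algebra_simps)
  also have "\<dots> = 2 * b / (b - 1) * ln (1 + x)" using x by (simp add: k_def ln_realpow)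
  finally show ?thesis .
qed

lemma log_xi_le_ln_large:
  assumes b: "1 < b" and x: "1 \<le> x"
  shows "log_xi b x \<le> b / (b - 1) * (ln (4 * exp 1) / 2 + ln x)"
proof -
  define r where "r = inverse b"
  define k where "k = b / (b - 1)"
  have r: "0 < r" using b r_def by simp
  define h where "h i = r ^ i * (ln 2 + ln x) + ln b / 2 * (real (Suc i) * r ^ i - r ^ i)" for i
  have term_le: "r ^ i * ln (1 + xi_coeff b i * x) \<le> h i" for i
  proof -
    have c: "0 \<le> xi_coeff b i" "xi_coeff b i \<le> sqrt (b ^ i)"
      using xi_coeff_nonneg xi_coeff_le_sqrt_power b by auto
    have "1 \<le> sqrt (b ^ i)" using b by simp
    hence "1 \<le> x * sqrt (b ^ i)" using mult_mono[of 1 x 1 "sqrt (b ^ i)"] x by simp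
    moreover have "xi_coeff b i * x \<le> x * sqrt (b ^ i)" using c x by (simp add: mult.commute)
    ultimately have "1 + xi_coeff b i * x \<le> 2 * x * sqrt (b ^ i)" by simp
    moreover have "0 < 1 + xi_coeff b i * x" using c x by (simp add: add_pos_nonneg)
    ultimately have "ln (1 + xi_coeff b i * x) \<le> ln (2 * x * sqrt (b ^ i))" by simp
    also have "\<dots> = ln 2 + ln x + real i * ln b / 2"
      using x b by (simp add: ln_mult ln_sqrt ln_realpow)
    finally have "r ^ i * ln (1 + xi_coeff b i * x) \<le> r ^ i * (ln 2 + ln x + real i * ln b / 2)"
      using r by (simp add: mult_left_mono)
    thus ?thesis unfolding h_def by (simp add: algebra_simps)
  qed
  have "h sums (k * (ln 2 + ln x) + ln b / 2 * (k\<^sup>2 - k))"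
    unfolding h_def k_def r_def
    using sums_inverse_power[OF b] sums_Suc_mult_inverse_power[OF b]
    by (intro sums_add sums_mult sums_diff sums_mult2)
  hence "log_xi b x \<le> k * (ln 2 + ln x) + ln b / 2 * (k\<^sup>2 - k)"
    unfolding log_xi_def r_def[symmetric]
    by (intro sums_le[OF _ summable_sums]) (use term_le summable_log_xi[OF b] x r_def in auto)
  also have "ln b / 2 * (k\<^sup>2 - k) = ln b / 2 * k * (k - 1)"
    by (simp add: power2_eq_square algebra_simps)
  also have "k - 1 = 1 / (b - 1)" using b by (simp add: k_def field_simps)
  also have "ln b / 2 * k * (1 / (b - 1)) = ln b / (b - 1) * (k / 2)" by simp
  also have "\<dots> \<le> k / 2"
  proof -
    have "ln b / (b - 1) \<le> 1" using ln_le_minus_one[of b] b by simp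
    moreover have "0 \<le> k / 2" using b by (simp add: k_def)
    ultimately show ?thesis by (metis mult_1 mult_right_mono)
  qed
  also have "k * (ln 2 + ln x) + k / 2 = k * (ln (4 * exp 1) / 2 + ln x)"
    using ln_realpow[of 2 2] by (simp add: ln_mult algebra_simps)
  finally show ?thesis unfolding k_def by simp
qed

theorem lemmaB2:
  fixes n :: nat
  assumes "n \<ge> 3"
  shows "(\<forall>x::real. x \<ge> 0 \<longrightarrow> xi n x \<le> (1 + x) ^ n) \<and>
         (\<forall>x::real. x \<ge> 1 \<longrightarrow> xi n x \<le> (4 * exp 1) powr (real n / 4) * x powr (real n / 2))"
proof -
  have b: "1 < beta n" and m: "2 * beta n / (beta n - 1) = real n"
    and m_half: "beta n / (beta n - 1) = real n / 2"
    using assms by (auto simp: beta_def field_simps)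
  have xi_exp: "xi n x = exp (log_xi (beta n) x)" if "0 \<le> x" for x
    using prodinf_xi_factors_eq_exp_log_xi[OF b that] by (simp add: xi_def xi_coeff_def)
  have "xi n x \<le> (1 + x) ^ n" if x: "0 \<le> x" for x
  proof -
    have "xi n x \<le> exp (real n * ln (1 + x))"
      using log_xi_le_ln_one_plus[OF b x] by (simp add: xi_exp[OF x] m)
    thus ?thesis using x by (simp add: exp_of_nat_mult)
  qed
  moreover have "xi n x \<le> (4 * exp 1) powr (real n / 4) * x powr (real n / 2)"
    if x: "1 \<le> x" for x
  proof -
    have "xi n x \<le> exp (real n / 2 * (ln (4 * exp 1) / 2 + ln x))"
      using log_xi_le_ln_large[OF b x] x by (simp add: xi_exp m_half)
    also have "\<dots> = exp (real n / 4 * ln (4 * exp 1)) * exp (real n / 2 * ln x)"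
      by (simp add: exp_add[symmetric] algebra_simps)
    finally show ?thesis using x by (simp add: powr_def)
  qed
  ultimately show ?thesis by blast
qed

end
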